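(* Let $n\ge1$, $p$ a prime dividing $n$, $0\le t\le p-1$, and $q\in B\setminus B_t$. Put $Q:=B_t\cup\{q\}$. If $y\in\mathrm{Sm}(\prec_{deg},Q)\setminus\mathrm{Sm}(\prec_{deg},B_t)$, then $\deg y\ge\frac{n(p-1)}{p}$.
   Context: $\omega_1=e^{2\pi i/p}$, $\omega_j=\omega_1^j$; $B=\{1,\omega_1,\ldots,\omega_{p-1}\}^n\subseteq\mathbb{C}^n$, $B_t=\{(t_1,\ldots,t_n)\in B: t_1\cdots t_n=\omega_t\}$. $\prec_{deg}$ is the deglex order on monomials of $\mathbb{C}[x_1,\dots,x_n]$ (compare degrees first, ties broken lexicographically with $x_n\prec\cdots\prec x_1$). $\mathrm{Sm}(\prec,X)$ is the set of monomials that are not the $\prec$-leading monomial of any nonzero polynomial vanishing on $X$. *)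

theory Defs
  imports Complex_Main "HOL-Library.Poly_Mapping" "HOL-Computational_Algebra.Primes"
begin

(* Variables x_1,...,x_n are indexed 0,...,n-1. A monomial is an exponent
  vector m :: nat \<Rightarrow>\<^sub>0 nat supported in {..<n}; a polynomial in
  C[x_1..x_n] is a finitely supported map from monomials to complex coefficients,
  all of whose monomials are supported in {..<n}. Points of C^n are functions
  nat \<Rightarrow> complex, only the coordinates 0..n-1 of which matter.*)

type_synonym monom = "nat \<Rightarrow>\<^sub>0 nat"
type_synonym mpoly = "monom \<Rightarrow>\<^sub>0 complex"

definition is_monom :: "nat \<Rightarrow> monom \<Rightarrow> bool" where
  "is_monom n m \<longleftrightarrow> Poly_Mapping.keys m \<subseteq> {..<n}"

definition is_poly :: "nat \<Rightarrow> mpoly \<Rightarrow> bool" where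
  "is_poly n f \<longleftrightarrow> (\<forall>m\<in>Poly_Mapping.keys f. is_monom n m)"

definition mdeg :: "monom \<Rightarrow> nat" where
  "mdeg m = (\<Sum>i\<in>Poly_Mapping.keys m. Poly_Mapping.lookup m i)"

definition monom_eval :: "monom \<Rightarrow> (nat \<Rightarrow> complex) \<Rightarrow> complex" where
  "monom_eval m x = (\<Prod>i\<in>Poly_Mapping.keys m. x i ^ Poly_Mapping.lookup m i)"

definition poly_eval :: "mpoly \<Rightarrow> (nat \<Rightarrow> complex) \<Rightarrow> complex" where
  "poly_eval f x = (\<Sum>m\<in>Poly_Mapping.keys f. Poly_Mapping.lookup f m * monom_eval m x)"

(* Lex order with x_n < ... < x_1: compare exponent of x_1 (index 0) first.*)
definition lex_less :: "monom \<Rightarrow> monom \<Rightarrow> bool" where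
  "lex_less m m' \<longleftrightarrow> (\<exists>i. Poly_Mapping.lookup m i < Poly_Mapping.lookup m' i \<and> (\<forall>j<i. Poly_Mapping.lookup m j = Poly_Mapping.lookup m' j))"

definition deglex_less :: "monom \<Rightarrow> monom \<Rightarrow> bool" where
  "deglex_less m m' \<longleftrightarrow> mdeg m < mdeg m' \<or> (mdeg m = mdeg m' \<and> lex_less m m')"

definition is_leading_monom :: "mpoly \<Rightarrow> monom \<Rightarrow> bool" where
  "is_leading_monom f m \<longleftrightarrow> m \<in> Poly_Mapping.keys f \<and> (\<forall>m'\<in>Poly_Mapping.keys f. m' \<noteq> m \<longrightarrow> deglex_less m' m)"

definition Sm_deglex :: "nat \<Rightarrow> (nat \<Rightarrow> complex) set \<Rightarrow> monom set" where
  "Sm_deglex n X = {m. is_monom n m \<and>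
     \<not> (\<exists>f. f \<noteq> 0 \<and> is_poly n f \<and> (\<forall>x\<in>X. poly_eval f x = 0) \<and> is_leading_monom f m)}"

definition omega :: "nat \<Rightarrow> nat \<Rightarrow> complex" where
  "omega p j = cis (2 * pi * real j / real p)"

definition cubeB :: "nat \<Rightarrow> nat \<Rightarrow> (nat \<Rightarrow> complex) set" where
  "cubeB n p = {x. (\<forall>i<n. x i \<in> omega p ` {0..<p}) \<and> (\<forall>i\<ge>n. x i = 0)}"

definition cubeBt :: "nat \<Rightarrow> nat \<Rightarrow> nat \<Rightarrow> (nat \<Rightarrow> complex) set" where
  "cubeBt n p t = {x \<in> cubeB n p. (\<Prod>i<n. x i) = omega p t}"

end

theory Submission
  imports Defs "HOL-Library.FuncSet" "HOL-Number_Theory.Cong"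
begin

text \<open>Parametrise the cube \<open>B\<close> by exponent vectors \<open>e \<in> {0..p-1}^n\<close>. On \<open>B\<close> the monomial
  \<open>x^a\<close> takes the value \<open>\<omega>^(a\<cdot>e)\<close>, so a polynomial \<open>f\<close> restricted to \<open>B\<close> is the character sum
  \<open>\<Sum>\<^sub>r C\<^sub>r \<omega>^(r\<cdot>e)\<close>, where \<open>C\<^sub>r\<close> sums the coefficients of the monomials whose exponent vector
  is congruent to \<open>r\<close> modulo \<open>p\<close>. If \<open>f\<close> vanishes on \<open>B\<^sub>t = {\<Sum>e \<equiv> t}\<close>, then so does \<open>f\<close> times
  \<open>\<Sum>\<^sub>k \<omega>^(k(\<Sum>e - t))\<close>, which is \<open>p\<close> times the indicator of \<open>B\<^sub>t\<close>; its Fourier coefficients give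
  \<open>\<Sum>\<^sub>k \<omega>^(-kt) C\<^bsub>r - k\<cdot>1\<^esub> = 0\<close> for every class \<open>r\<close>. Two monomials of degree at most \<open>d\<close> whose
  classes differ by \<open>k\<cdot>1\<close> with \<open>0 < k < p\<close> force \<open>p d \<ge> n (p - 1)\<close>. Hence if all monomials of \<open>f\<close>
  have degree below \<open>n (p - 1) / p\<close>, only \<open>k = 0\<close> survives, every \<open>C\<^sub>r\<close> vanishes, and \<open>f\<close>
  vanishes on all of \<open>B\<close>, in particular at \<open>q\<close>. Applied to a polynomial with leading monomial \<open>y\<close>
  witnessing \<open>y \<notin> Sm(B\<^sub>t)\<close>, this shows \<open>y \<notin> Sm(Q)\<close> whenever \<open>deg y < n (p - 1) / p\<close>.\<close>

definition omega_int :: "nat \<Rightarrow> int \<Rightarrow> complex" where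
  "omega_int p m = cis (2 * pi * of_int m / of_nat p)"

lemma omega_int_of_nat: "omega_int p (int j) = omega p j"
  by (simp add: omega_int_def omega_def)

lemma omega_int_add: "omega_int p (a + b) = omega_int p a * omega_int p b"
  by (simp add: omega_int_def cis_mult add_divide_distrib distrib_left)

lemma omega_int_0 [simp]: "omega_int p 0 = 1"
  by (simp add: omega_int_def)

lemma omega_int_sum: "finite I \<Longrightarrow> omega_int p (\<Sum>i\<in>I. f i) = (\<Prod>i\<in>I. omega_int p (f i))"
  by (induction I rule: finite_induct) (auto simp: omega_int_add)

lemma omega_int_power: "omega_int p m ^ j = omega_int p (m * int j)"
  by (simp add: omega_int_def DeMoivre mult.commute mult.left_commute)

lemma omega_int_eq_1_iff:
  assumes "p > 0"
  shows "omega_int p m = 1 \<longleftrightarrow> int p dvd m"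
proof
  assume "omega_int p m = 1"
  then have "cos (2 * pi * of_int m / of_nat p) = 1"
    by (metis cis.sel(1) one_complex.sel(1) omega_int_def)
  then obtain k :: int where "2 * pi * of_int m / of_nat p = of_int k * 2 * pi"
    using cos_one_2pi_int by blast
  then have "of_int m = (of_int (k * int p) :: real)"
    using assms by (simp add: field_simps)
  then show "int p dvd m" by (simp only: of_int_eq_iff) simp
next
  assume "int p dvd m"
  then obtain k where "m = int p * k" by (elim dvdE)
  then have "2 * pi * of_int m / of_nat p = 2 * pi * of_int k" using assms by simp
  then show "omega_int p m = 1" by (simp add: omega_int_def)
qed

lemma omega_int_cong:
  assumes "p > 0" "int p dvd a - b"
  shows "omega_int p a = omega_int p b"
  using omega_int_add[of p "a - b" b] omega_int_eq_1_iff[OF assms(1)] assms(2) by simp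

lemma sum_omega_int_multiples:
  assumes "p > 0"
  shows "(\<Sum>j<p. omega_int p (m * int j)) = (if int p dvd m then of_nat p else 0)"
proof (cases "int p dvd m")
  case True
  then have "omega_int p (m * int j) = 1" for j
    using assms by (simp add: omega_int_eq_1_iff)
  then show ?thesis using True by simp
next
  case False
  have "omega_int p m ^ p = 1" using assms by (simp add: omega_int_power omega_int_eq_1_iff)
  moreover have "omega_int p m \<noteq> 1" using assms False by (simp add: omega_int_eq_1_iff)
  ultimately have "(\<Sum>j<p. omega_int p m ^ j) = 0" by (simp add: sum_gp_strict)
  then show ?thesis using False by (simp add: omega_int_power)
qed

definition exponent_grid :: "nat \<Rightarrow> nat \<Rightarrow> (nat \<Rightarrow> nat) set" where
  "exponent_grid n p = PiE {..<n} (\<lambda>_. {..<p})"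

definition grid_point :: "nat \<Rightarrow> nat \<Rightarrow> (nat \<Rightarrow> nat) \<Rightarrow> nat \<Rightarrow> complex" where
  "grid_point n p e = (\<lambda>i. if i < n then omega p (e i) else 0)"

definition exp_pairing :: "nat \<Rightarrow> monom \<Rightarrow> (nat \<Rightarrow> nat) \<Rightarrow> int" where
  "exp_pairing n a e = (\<Sum>i<n. int (Poly_Mapping.lookup a i) * int (e i))"

lemma cubeB_eq_grid_points: "cubeB n p = grid_point n p ` exponent_grid n p"
proof
  show "grid_point n p ` exponent_grid n p \<subseteq> cubeB n p"
  proof
    fix x assume "x \<in> grid_point n p ` exponent_grid n p"
    then obtain e where e: "e \<in> exponent_grid n p" and x: "x = grid_point n p e" ..
    from e have "omega p (e i) \<in> omega p ` {0..<p}" if "i < n" for i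
      using that by (intro imageI) (auto simp: exponent_grid_def PiE_iff)
    then show "x \<in> cubeB n p" by (simp add: x cubeB_def grid_point_def)
  qed
next
  show "cubeB n p \<subseteq> grid_point n p ` exponent_grid n p"
  proof
    fix x assume x: "x \<in> cubeB n p"
    have ex: "\<exists>j. j < p \<and> x i = omega p j" if "i < n" for i
      using x that unfolding cubeB_def by force
    define e0 where "e0 i = (SOME j. j < p \<and> x i = omega p j)" for i
    have e0: "e0 i < p \<and> x i = omega p (e0 i)" if "i < n" for i
      unfolding e0_def using someI_ex[OF ex[OF that]] .
    define e where "e = restrict e0 {..<n}"
    have "e \<in> exponent_grid n p"
      using e0 by (auto simp: e_def exponent_grid_def)
    moreover have "x = grid_point n p e"
      using x e0 by (auto simp: e_def grid_point_def cubeB_def)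
    ultimately show "x \<in> grid_point n p ` exponent_grid n p" by blast
  qed
qed

lemma grid_point_in_cubeBt:
  assumes "e \<in> exponent_grid n p" "p > 0" "int p dvd (\<Sum>i<n. int (e i)) - int t"
  shows "grid_point n p e \<in> cubeBt n p t"
proof -
  have "(\<Prod>i<n. grid_point n p e i) = omega_int p (\<Sum>i<n. int (e i))"
    by (simp add: grid_point_def omega_int_sum omega_int_of_nat)
  also have "\<dots> = omega p t"
    using omega_int_cong[OF assms(2,3)] by (simp add: omega_int_of_nat)
  finally show ?thesis
    using assms(1) cubeB_eq_grid_points unfolding cubeBt_def by blast
qed

lemma sum_keys_eq_sum_lessThan:
  assumes "is_monom n a" "\<And>i. h i 0 = 0"
  shows "(\<Sum>i\<in>Poly_Mapping.keys a. h i (Poly_Mapping.lookup a i)) =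
    (\<Sum>i<n. h i (Poly_Mapping.lookup a i))"
  using assms unfolding is_monom_def
  by (intro sum.mono_neutral_left) (auto simp: in_keys_iff)

lemma mdeg_eq_sum_lessThan: "is_monom n a \<Longrightarrow> mdeg a = (\<Sum>i<n. Poly_Mapping.lookup a i)"
  unfolding mdeg_def using sum_keys_eq_sum_lessThan[of n a "\<lambda>i x. x"] by simp

lemma monom_eval_grid_point:
  assumes "is_monom n a"
  shows "monom_eval a (grid_point n p e) = omega_int p (exp_pairing n a e)"
proof -
  have "monom_eval a (grid_point n p e) =
      (\<Prod>i\<in>Poly_Mapping.keys a. omega_int p (int (Poly_Mapping.lookup a i) * int (e i)))"
    unfolding monom_eval_def using assms
    by (intro prod.cong refl)
      (auto simp: is_monom_def grid_point_def omega_int_of_nat[symmetric] omega_int_power mult.commute)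
  also have "\<dots> = omega_int p (exp_pairing n a e)"
    unfolding exp_pairing_def omega_int_sum[OF finite_keys, symmetric]
    using sum_keys_eq_sum_lessThan[OF assms, of "\<lambda>i x. int x * int (e i)"] by simp
  finally show ?thesis .
qed

lemma poly_eval_grid_point:
  assumes "is_poly n f"
  shows "poly_eval f (grid_point n p e) =
    (\<Sum>a\<in>Poly_Mapping.keys f. Poly_Mapping.lookup f a * omega_int p (exp_pairing n a e))"
  unfolding poly_eval_def using assms
  by (intro sum.cong refl) (auto simp: is_poly_def monom_eval_grid_point)

lemma sum_exponent_grid_omega_int:
  assumes "p > 0"
  shows "(\<Sum>e\<in>exponent_grid n p. omega_int p (\<Sum>i<n. m i * int (e i))) =
    (if \<forall>i<n. int p dvd m i then of_nat p ^ n else 0)"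
proof -
  have "(\<Sum>e\<in>exponent_grid n p. omega_int p (\<Sum>i<n. m i * int (e i))) =
      (\<Sum>e\<in>exponent_grid n p. \<Prod>i<n. omega_int p (m i * int (e i)))"
    by (simp add: omega_int_sum)
  also have "\<dots> = (\<Prod>i<n. \<Sum>j<p. omega_int p (m i * int j))"
    unfolding exponent_grid_def by (rule prod_sum_PiE[symmetric]) auto
  also have "\<dots> = (\<Prod>i<n. if int p dvd m i then of_nat p else 0)"
    by (simp add: sum_omega_int_multiples[OF assms])
  also have "\<dots> = (if \<forall>i<n. int p dvd m i then of_nat p ^ n else 0)"
    by auto
  finally show ?thesis .
qed

lemma shift_cong_coord_bound:
  fixes u v k p :: nat
  assumes "0 < k" "k < p" "[u + k = v] (mod p)"
  shows "k * (p - k) \<le> k * u + (p - k) * v"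
proof (cases "u mod p + k < p")
  case True
  have "v mod p = (u mod p + k) mod p"
    using assms(3) by (simp add: cong_def mod_add_left_eq)
  also have "\<dots> = u mod p + k" using True by simp
  finally have "k \<le> v" by (metis le_add2 mod_less_eq_dividend order_trans)
  then show ?thesis by (simp add: mult.commute trans_le_add2)
next
  case False
  then have "p - k \<le> u" using mod_less_eq_dividend[of u p] by linarith
  then show ?thesis by (simp add: trans_le_add1)
qed

lemma pred_le_mult_complement:
  fixes k p :: nat
  assumes "0 < k" "k < p"
  shows "p - 1 \<le> k * (p - k)"
proof -
  obtain j l where "k = Suc j" "p - k = Suc l"
    using assms by (metis Suc_pred zero_less_diff)
  then show ?thesis using assms by simp
qed

lemma shift_cong_monoms_degree:
  assumes "is_monom n a" "is_monom n b" "0 < k" "k < p"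
    and "\<forall>i<n. [Poly_Mapping.lookup a i + k = Poly_Mapping.lookup b i] (mod p)"
    and "mdeg a \<le> d" "mdeg b \<le> d"
  shows "n * (p - 1) \<le> p * d"
proof -
  have "n * (p - 1) \<le> n * (k * (p - k))"
    using pred_le_mult_complement[OF assms(3,4)] by simp
  also have "\<dots> \<le> (\<Sum>i<n. k * Poly_Mapping.lookup a i + (p - k) * Poly_Mapping.lookup b i)"
    using sum_mono[of "{..<n}" "\<lambda>_. k * (p - k)"] shift_cong_coord_bound assms(3-5) by simp
  also have "\<dots> = k * mdeg a + (p - k) * mdeg b"
    by (simp add: mdeg_eq_sum_lessThan[OF assms(1)] mdeg_eq_sum_lessThan[OF assms(2)]
        sum.distrib sum_distrib_left)
  also have "\<dots> \<le> k * d + (p - k) * d"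
    using assms(6,7) by (intro add_mono mult_left_mono) auto
  also have "\<dots> = p * d"
    using assms(4) by (simp add: add_mult_distrib[symmetric])
  finally show ?thesis .
qed

text \<open>The class sum \<open>C\<^bsub>r - k\<cdot>1\<^esub>\<close> of the header, with \<open>r\<close> the class of the monomial \<open>b\<close>.\<close>

definition shifted_class_sum :: "nat \<Rightarrow> nat \<Rightarrow> mpoly \<Rightarrow> monom \<Rightarrow> nat \<Rightarrow> complex" where
  "shifted_class_sum n p f b k = (\<Sum>a\<in>Poly_Mapping.keys f.
     if \<forall>i<n. [Poly_Mapping.lookup a i + k = Poly_Mapping.lookup b i] (mod p)
     then Poly_Mapping.lookup f a else 0)"

lemma int_dvd_diff_iff_cong: "int p dvd int u - int v \<longleftrightarrow> [u = v] (mod p)"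
  by (metis cong_int_iff cong_iff_dvd_diff)

lemma int_dvd_iff_cong_add:
  "int p dvd int u + int k - int v \<longleftrightarrow> [u + k = v] (mod p)"
  by (metis int_dvd_diff_iff_cong of_nat_add)

lemma omega_int_shift_pairing:
  "omega_int p (exp_pairing n a e) * omega_int p (int k * (\<Sum>i<n. int (e i)) - exp_pairing n b e) =
   omega_int p (\<Sum>i<n. (int (Poly_Mapping.lookup a i) + int k - int (Poly_Mapping.lookup b i)) * int (e i))"
  unfolding omega_int_add[symmetric] exp_pairing_def
  by (simp add: algebra_simps sum.distrib sum_subtractf sum_distrib_left)

lemma grid_fourier_coeff:
  assumes "p > 0" "is_poly n f"
  shows "(\<Sum>e\<in>exponent_grid n p. poly_eval f (grid_point n p e) *
      omega_int p (int k * (\<Sum>i<n. int (e i)) - exp_pairing n b e)) =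
    of_nat p ^ n * shifted_class_sum n p f b k"
proof -
  let ?c = "Poly_Mapping.lookup f"
  let ?m = "\<lambda>a i. int (Poly_Mapping.lookup a i) + int k - int (Poly_Mapping.lookup b i)"
  have "(\<Sum>e\<in>exponent_grid n p. poly_eval f (grid_point n p e) *
      omega_int p (int k * (\<Sum>i<n. int (e i)) - exp_pairing n b e)) =
    (\<Sum>e\<in>exponent_grid n p. \<Sum>a\<in>Poly_Mapping.keys f. ?c a * omega_int p (\<Sum>i<n. ?m a i * int (e i)))"
    by (simp add: poly_eval_grid_point[OF assms(2)] sum_distrib_right mult.assoc
        omega_int_shift_pairing)
  also have "\<dots> = (\<Sum>a\<in>Poly_Mapping.keys f. ?c a *
      (\<Sum>e\<in>exponent_grid n p. omega_int p (\<Sum>i<n. ?m a i * int (e i))))"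
    by (simp add: sum.swap[of _ "exponent_grid n p"] sum_distrib_left)
  also have "\<dots> = (\<Sum>a\<in>Poly_Mapping.keys f. ?c a *
      (if \<forall>i<n. int p dvd ?m a i then of_nat p ^ n else 0))"
    by (simp only: sum_exponent_grid_omega_int[OF assms(1)])
  also have "\<dots> = of_nat p ^ n * shifted_class_sum n p f b k"
    unfolding shifted_class_sum_def sum_distrib_left
    by (intro sum.cong refl) (auto simp: int_dvd_iff_cong_add)
  finally show ?thesis .
qed

lemma shifted_class_sums_relation:
  assumes "p > 0" "is_poly n f" "\<forall>x\<in>cubeBt n p t. poly_eval f x = 0"
  shows "(\<Sum>k<p. omega_int p (- (int k * int t)) * shifted_class_sum n p f b k) = 0"
proof -
  let ?g = "\<lambda>e. poly_eval f (grid_point n p e)"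
  let ?s = "\<lambda>e. (\<Sum>i<n. int (e i)) - int t"
  \<comment> \<open>\<open>\<Sum>\<^sub>k \<omega>^(k(\<Sum>e - t))\<close> is \<open>p\<close> times the indicator of \<open>B\<^sub>t\<close>, on which \<open>f\<close> vanishes\<close>
  have vanish: "?g e * (\<Sum>k<p. omega_int p (?s e * int k)) = 0" if "e \<in> exponent_grid n p" for e
  proof (cases "int p dvd ?s e")
    case True
    then show ?thesis using grid_point_in_cubeBt[OF that assms(1)] assms(3) by simp
  next
    case False
    then show ?thesis by (simp add: sum_omega_int_multiples[OF assms(1)])
  qed
  have shift: "omega_int p (- (int k * int t)) *
      (?g e * omega_int p (int k * (\<Sum>i<n. int (e i)) - exp_pairing n b e)) =
    omega_int p (- exp_pairing n b e) * (?g e * omega_int p (?s e * int k))" for k e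
  proof -
    have "omega_int p (- (int k * int t)) *
        omega_int p (int k * (\<Sum>i<n. int (e i)) - exp_pairing n b e) =
      omega_int p (- exp_pairing n b e) * omega_int p (?s e * int k)"
      by (simp only: omega_int_add[symmetric]) (simp add: algebra_simps)
    then show ?thesis by (simp only: mult.left_commute)
  qed
  have "of_nat p ^ n * (\<Sum>k<p. omega_int p (- (int k * int t)) * shifted_class_sum n p f b k) =
    (\<Sum>k<p. omega_int p (- (int k * int t)) * (of_nat p ^ n * shifted_class_sum n p f b k))"
    by (simp add: sum_distrib_left mult_ac)
  also have "\<dots> = (\<Sum>k<p. omega_int p (- (int k * int t)) * (\<Sum>e\<in>exponent_grid n p.
      ?g e * omega_int p (int k * (\<Sum>i<n. int (e i)) - exp_pairing n b e)))"
    by (simp only: grid_fourier_coeff[OF assms(1,2)])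
  also have "\<dots> = (\<Sum>k<p. \<Sum>e\<in>exponent_grid n p.
      omega_int p (- exp_pairing n b e) * (?g e * omega_int p (?s e * int k)))"
    by (intro sum.cong refl, subst sum_distrib_left, rule sum.cong[OF refl shift])
  also have "\<dots> = (\<Sum>e\<in>exponent_grid n p. omega_int p (- exp_pairing n b e) *
      (?g e * (\<Sum>k<p. omega_int p (?s e * int k))))"
    by (subst sum.swap) (simp only: sum_distrib_left)
  also have "\<dots> = 0"
    by (intro sum.neutral ballI) (simp add: vanish)
  finally show ?thesis using assms(1) by simp
qed

lemma class_sum_eq_0_if_low_degree:
  assumes "p > 0" "is_poly n f" "\<forall>x\<in>cubeBt n p t. poly_eval f x = 0"
    and "\<forall>a\<in>Poly_Mapping.keys f. mdeg a \<le> d" "p * d < n * (p - 1)"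
    and "b \<in> Poly_Mapping.keys f"
  shows "shifted_class_sum n p f b 0 = 0"
proof -
  have monoms: "\<forall>a\<in>Poly_Mapping.keys f. is_monom n a"
    using assms(2) by (simp add: is_poly_def)
  have "shifted_class_sum n p f b k = 0" if "0 < k" "k < p" for k
    unfolding shifted_class_sum_def
  proof (intro sum.neutral ballI)
    fix a assume a: "a \<in> Poly_Mapping.keys f"
    have "\<not> (\<forall>i<n. [Poly_Mapping.lookup a i + k = Poly_Mapping.lookup b i] (mod p))"
      using shift_cong_monoms_degree[of n a b k p d] monoms a assms(4-6) that
      by (meson leD)
    then show "(if \<forall>i<n. [Poly_Mapping.lookup a i + k = Poly_Mapping.lookup b i] (mod p)
        then Poly_Mapping.lookup f a else 0) = 0" by (simp only: if_False)
  qed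
  then have "(\<Sum>k\<in>{..<p} - {0}. omega_int p (- (int k * int t)) * shifted_class_sum n p f b k) = 0"
    by (intro sum.neutral) auto
  then have "(\<Sum>k<p. omega_int p (- (int k * int t)) * shifted_class_sum n p f b k) =
      shifted_class_sum n p f b 0"
    using assms(1) by (simp add: sum.remove[of "{..<p}" 0])
  then show ?thesis
    using shifted_class_sums_relation[OF assms(1-3)] by simp
qed

lemma poly_eval_cubeB_eq_0_if_class_sums_eq_0:
  assumes "p > 0" "is_poly n f" "\<forall>b\<in>Poly_Mapping.keys f. shifted_class_sum n p f b 0 = 0"
    and "x \<in> cubeB n p"
  shows "poly_eval f x = 0"
proof -
  let ?K = "Poly_Mapping.keys f"
  let ?c = "Poly_Mapping.lookup f"
  obtain e where x: "x = grid_point n p e"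
    using assms(4) cubeB_eq_grid_points by blast
  define res where "res a = restrict (\<lambda>i. Poly_Mapping.lookup a i mod p) {..<n}" for a
  define W where "W a = omega_int p (exp_pairing n a e)" for a
  have res_eq_iff: "res a = res b \<longleftrightarrow>
      (\<forall>i<n. [Poly_Mapping.lookup a i = Poly_Mapping.lookup b i] (mod p))" for a b
    by (auto simp: res_def cong_def fun_eq_iff)
  have W_eq: "W a = W b" if "res a = res b" for a b
  proof -
    have "exp_pairing n a e - exp_pairing n b e = (\<Sum>i<n.
        (int (Poly_Mapping.lookup a i) - int (Poly_Mapping.lookup b i)) * int (e i))"
      by (simp add: exp_pairing_def sum_subtractf left_diff_distrib)
    moreover have "int p dvd \<dots>"
      using that unfolding res_eq_iff
      by (intro dvd_sum dvd_mult2) (simp add: int_dvd_diff_iff_cong)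
    ultimately show ?thesis
      unfolding W_def using omega_int_cong[OF assms(1)] by metis
  qed
  have class_zero: "(\<Sum>a\<in>{a\<in>?K. res a = r}. ?c a * W a) = 0" if "r \<in> res ` ?K" for r
  proof -
    obtain b where b: "b \<in> ?K" "r = res b" using \<open>r \<in> res ` ?K\<close> by blast
    have "(\<Sum>a\<in>{a\<in>?K. res a = r}. ?c a * W a) = (\<Sum>a\<in>{a\<in>?K. res a = res b}. W b * ?c a)"
      unfolding b(2) by (intro sum.cong refl) (metis (mono_tags, lifting) W_eq mem_Collect_eq mult.commute)
    also have "\<dots> = W b * (\<Sum>a\<in>{a\<in>?K. res a = res b}. ?c a)"
      by (rule sum_distrib_left[symmetric])
    also have "(\<Sum>a\<in>{a\<in>?K. res a = res b}. ?c a) = shifted_class_sum n p f b 0"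
      unfolding shifted_class_sum_def res_eq_iff
      by (simp only: add_0_right sum.inter_filter[OF finite_keys])
    finally show ?thesis using assms(3) b(1) by simp
  qed
  have "poly_eval f x = (\<Sum>a\<in>?K. ?c a * W a)"
    unfolding x W_def by (rule poly_eval_grid_point[OF assms(2)])
  also have "\<dots> = (\<Sum>r\<in>res ` ?K. \<Sum>a\<in>{a\<in>?K. res a = r}. ?c a * W a)"
    by (rule sum.group[symmetric]) auto
  also have "\<dots> = 0"
    using class_zero by simp
  finally show ?thesis .
qed

lemma vanishing_on_cubeBt_extends_to_cubeB:
  assumes "p > 0" "is_poly n f" "\<forall>x\<in>cubeBt n p t. poly_eval f x = 0"
    and "\<forall>a\<in>Poly_Mapping.keys f. mdeg a \<le> d" "p * d < n * (p - 1)"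
  shows "\<forall>x\<in>cubeB n p. poly_eval f x = 0"
  using poly_eval_cubeB_eq_0_if_class_sums_eq_0[OF assms(1,2)]
    class_sum_eq_0_if_low_degree[OF assms] by blast

theorem mainTheorem10:
  fixes n p t :: nat and q :: "nat \<Rightarrow> complex" and y :: monom
  assumes "n \<ge> 1" and "prime p" and "p dvd n" and "t \<le> p - 1"
    and "q \<in> cubeB n p - cubeBt n p t"
    and "y \<in> Sm_deglex n (cubeBt n p t \<union> {q}) - Sm_deglex n (cubeBt n p t)"
  shows "real (mdeg y) \<ge> real n * (real p - 1) / real p"
proof (rule ccontr)
  assume small: "\<not> ?thesis"
  have p: "p > 0" using assms(2) prime_gt_0_nat by blast
  have "real (p * mdeg y) < real (n * (p - 1))"
    using small p by (simp add: field_simps of_nat_diff)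
  then have low: "p * mdeg y < n * (p - 1)" by (simp only: of_nat_less_iff)
  obtain f where "f \<noteq> 0" "is_poly n f" and vanish: "\<forall>x\<in>cubeBt n p t. poly_eval f x = 0"
    and lead: "is_leading_monom f y"
    using assms(6) by (auto simp: Sm_deglex_def)
  have "\<forall>a\<in>Poly_Mapping.keys f. mdeg a \<le> mdeg y"
    using lead by (auto simp: is_leading_monom_def deglex_less_def)
  then have "\<forall>x\<in>cubeB n p. poly_eval f x = 0"
    using vanishing_on_cubeBt_extends_to_cubeB[OF p \<open>is_poly n f\<close> vanish _ low] by blast
  then have "\<forall>x\<in>cubeBt n p t \<union> {q}. poly_eval f x = 0"
    using vanish assms(5) by blast
  then show False
    using assms(6) \<open>f \<noteq> 0\<close> \<open>is_poly n f\<close> lead by (auto simp: Sm_deglex_def)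
qed

end
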